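(* Let $I(\gamma)$ be the ideal of $S^G$ generated by $\{P_\iota:\iota\in U_\#(\gamma)\}$. Then the closed subvariety $\mathcal{V}(I(\gamma))$ of $V/G$ defined by $I(\gamma)$ equals the fixed-point set $(V/G)^\gamma$.
   Context: Let $K$ be an algebraically closed field of characteristic $0$, $V$ an $r$-dimensional $K$-vector space and $G\subset\mathrm{GL}(V)$ a finite group generated by (pseudo)reflections. Let $S$ be the graded algebra of polynomial functions on $V$, with $\mathrm{GL}(V)$ acting by $(gf)(v)=f(g^{-1}v)$; $V/G$ is the quotient variety, with coordinate ring $S^G$, on which $\gamma$ acts. Fix a semisimple $\gamma\in\mathrm{GL}(V)$ normalising $G$. There is a set $\{P_\iota:\iota\in\mathcal{B}(\gamma)\}$ of $r$ homogeneous algebraically independent generators of $S^G$ (basic invariants), indexed by a finite set $\mathcal{B}(\gamma)$, with $\gamma(P_\iota)=\varepsilon_\iota P_\iota$ for scalars $\varepsilon_\iota\in K^\times$; let $U_\#(\gamma)=\{\iota\in\mathcal{B}(\gamma):\varepsilon_\iota\neq 1\}$. *)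

theory Defs
  imports "HOL-Analysis.Analysis" "HOL-Computational_Algebra.Polynomial"
begin

text \<open>Polynomial functions in the coordinates indexed by a set A
  (as functions on coordinate vectors). Over an infinite field these are
  the same as polynomials.\<close>
inductive_set polys :: "'i set \<Rightarrow> (('i \<Rightarrow> 'k::comm_ring_1) \<Rightarrow> 'k) set" for A where
  const: "(\<lambda>x. c) \<in> polys A"
| coord: "i \<in> A \<Longrightarrow> (\<lambda>x. x i) \<in> polys A"
| add: "p \<in> polys A \<Longrightarrow> q \<in> polys A \<Longrightarrow> (\<lambda>x. p x + q x) \<in> polys A"
| mult: "p \<in> polys A \<Longrightarrow> q \<in> polys A \<Longrightarrow> (\<lambda>x. p x * q x) \<in> polys A"

definition polyfuns :: "('k::comm_ring_1^'n \<Rightarrow> 'k) set" where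
  "polyfuns = {(\<lambda>v. Q (vec_nth v)) | Q. Q \<in> polys UNIV}"

definition homogeneous :: "('k::comm_ring_1^'n \<Rightarrow> 'k) \<Rightarrow> nat \<Rightarrow> bool" where
  "homogeneous f d \<longleftrightarrow> f \<in> polyfuns \<and> (\<forall>t v. f (t *s v) = t ^ d * f v)"

definition act :: "'k::field^'n^'n \<Rightarrow> ('k^'n \<Rightarrow> 'k) \<Rightarrow> ('k^'n \<Rightarrow> 'k)" where
  "act g f = (\<lambda>v. f (matrix_inv g *v v))"

definition invariants :: "('k::field^'n^'n) set \<Rightarrow> ('k^'n \<Rightarrow> 'k) set" where
  "invariants G = {f \<in> polyfuns. \<forall>g\<in>G. act g f = f}"

definition pseudoreflection :: "'k::field^'n^'n \<Rightarrow> bool" where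
  "pseudoreflection g \<longleftrightarrow> invertible g \<and> g \<noteq> mat 1 \<and> rank (g - mat 1) = 1"

inductive_set group_gen :: "('k::field^'n^'n) set \<Rightarrow> ('k^'n^'n) set" for R where
  one: "mat 1 \<in> group_gen R"
| mul: "r \<in> R \<Longrightarrow> x \<in> group_gen R \<Longrightarrow> r ** x \<in> group_gen R"
| mul_inv: "r \<in> R \<Longrightarrow> x \<in> group_gen R \<Longrightarrow> matrix_inv r ** x \<in> group_gen R"

definition finite_reflection_group :: "('k::field^'n^'n) set \<Rightarrow> bool" where
  "finite_reflection_group G \<longleftrightarrow> finite G \<and> (\<forall>g\<in>G. invertible g) \<and> mat 1 \<in> G
     \<and> (\<forall>g\<in>G. \<forall>h\<in>G. g ** h \<in> G) \<and> (\<forall>g\<in>G. matrix_inv g \<in> G)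
     \<and> G = group_gen {g\<in>G. pseudoreflection g}"

definition semisimple :: "'k::field^'n^'n \<Rightarrow> bool" where
  "semisimple g \<longleftrightarrow> (\<exists>P::'k^'n^'n. invertible P \<and>
     (\<forall>i j. i \<noteq> j \<longrightarrow> (P ** g ** matrix_inv P) $ i $ j = 0))"

definition basic_invariants ::
  "('k::field^'n^'n) set \<Rightarrow> 'i set \<Rightarrow> ('i \<Rightarrow> 'k^'n \<Rightarrow> 'k) \<Rightarrow> bool" where
  "basic_invariants G B P \<longleftrightarrow> finite B \<and> card B = CARD('n)
     \<and> (\<forall>\<iota>\<in>B. P \<iota> \<in> invariants G \<and> (\<exists>d. homogeneous (P \<iota>) d))
     \<and> invariants G = {(\<lambda>v. Q (\<lambda>\<iota>. P \<iota> v)) | Q. Q \<in> polys B}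
     \<and> (\<forall>Q \<in> polys B. (\<forall>v. Q (\<lambda>\<iota>. P \<iota> v) = 0) \<longrightarrow> (\<forall>x. Q x = 0))"

definition orbit :: "('k::semiring_1^'n^'n) set \<Rightarrow> 'k^'n \<Rightarrow> ('k^'n) set" where
  "orbit G v = (\<lambda>g. g *v v) ` G"

text \<open>Points of V/G, identified with G-orbits in V.\<close>
definition quotient_points :: "('k::semiring_1^'n^'n) set \<Rightarrow> ('k^'n) set set" where
  "quotient_points G = {orbit G v | v. True}"

definition zero_locus :: "('k::semiring_1^'n^'n) set \<Rightarrow> ('k^'n \<Rightarrow> 'k) set \<Rightarrow> ('k^'n) set set" where
  "zero_locus G I = {X \<in> quotient_points G. \<forall>f\<in>I. \<forall>v\<in>X. f v = 0}"

definition fixed_points :: "('k::semiring_1^'n^'n) set \<Rightarrow> 'k^'n^'n \<Rightarrow> ('k^'n) set set" where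
  "fixed_points G \<gamma> = {X \<in> quotient_points G. (\<lambda>w. \<gamma> *v w) ` X = X}"

definition gen_ideal :: "('k::field^'n^'n) set \<Rightarrow> 'i set \<Rightarrow> ('i \<Rightarrow> 'k^'n \<Rightarrow> 'k) \<Rightarrow> ('k^'n \<Rightarrow> 'k) set" where
  "gen_ideal G U P = {(\<lambda>v. \<Sum>\<iota>\<in>U. a \<iota> v * P \<iota> v) | a. \<forall>\<iota>\<in>U. a \<iota> \<in> invariants G}"

end

theory Submission
  imports Defs
begin

text \<open>Each basic invariant P_\<iota> is an eigenfunction of \<gamma>, so P_\<iota>(\<gamma> v) = P_\<iota>(v) / \<epsilon>_\<iota>;
  hence P_\<iota>(\<gamma> v) = P_\<iota>(v) for all \<iota> exactly when P_\<iota>(v) = 0 for all \<iota> in U_#(\<gamma>).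
  Invariants of a finite group separate orbits (take the product over the group of a polynomial
  that vanishes at v and is 1 on the orbit of w), and S^G is generated by the P_\<iota>, so this
  condition says \<gamma> v \<in> G v. As \<gamma> normalises G, \<gamma> (G v) = G (\<gamma> v), which equals G v iff
  \<gamma> v \<in> G v.\<close>

lemma
  fixes A :: "'a::semiring_1^'n^'n"
  assumes "invertible A"
  shows matrix_inv_right: "A ** matrix_inv A = mat 1"
    and matrix_inv_left: "matrix_inv A ** A = mat 1"
proof -
  have "\<exists>A'. A ** A' = mat 1 \<and> A' ** A = mat 1"
    using assms by (simp add: invertible_def)
  then have "A ** matrix_inv A = mat 1 \<and> matrix_inv A ** A = mat 1"
    unfolding matrix_inv_def by (rule someI_ex)
  then show "A ** matrix_inv A = mat 1" "matrix_inv A ** A = mat 1" by auto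
qed

lemma matrix_inv_mult_cancel:
  fixes A :: "'a::semiring_1^'n^'n"
  assumes "invertible A"
  shows "matrix_inv A *v (A *v x) = x" "A *v (matrix_inv A *v x) = x"
  using matrix_inv_right[OF assms] matrix_inv_left[OF assms]
  by (simp_all add: matrix_vector_mul_assoc)

lemma act_apply_image:
  assumes "invertible g"
  shows "act g f (g *v v) = f v"
  unfolding act_def using matrix_inv_mult_cancel[OF assms] by simp

lemma polys_cong:
  assumes "Q \<in> polys A" "\<forall>i\<in>A. x i = y i"
  shows "Q x = Q y"
  using assms by (induction rule: polys.induct) auto

lemma polyfuns_const: "(\<lambda>v. c) \<in> (polyfuns :: ('k::comm_ring_1^'n \<Rightarrow> 'k) set)"
  unfolding polyfuns_def by (auto intro!: exI[of _ "\<lambda>x. c"] polys.const)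

lemma invariants_const: "(\<lambda>x. c) \<in> invariants G"
  unfolding invariants_def act_def using polyfuns_const by auto

lemma polyfuns_coord: "(\<lambda>v. v $ i) \<in> (polyfuns :: ('k::comm_ring_1^'n \<Rightarrow> 'k) set)"
  unfolding polyfuns_def by (auto intro!: exI[of _ "\<lambda>x. x i"] polys.coord)

lemma polyfuns_add:
  assumes "f \<in> polyfuns" "g \<in> polyfuns"
  shows "(\<lambda>v. f v + g v) \<in> (polyfuns :: ('k::comm_ring_1^'n \<Rightarrow> 'k) set)"
proof -
  obtain Q R where "Q \<in> polys UNIV" "R \<in> polys UNIV"
    and "f = (\<lambda>v. Q (vec_nth v))" "g = (\<lambda>v. R (vec_nth v))"
    using assms unfolding polyfuns_def by auto
  then show ?thesis
    unfolding polyfuns_def by (auto intro!: exI[of _ "\<lambda>x. Q x + R x"] polys.add)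
qed

lemma polyfuns_mult:
  assumes "f \<in> polyfuns" "g \<in> polyfuns"
  shows "(\<lambda>v. f v * g v) \<in> (polyfuns :: ('k::comm_ring_1^'n \<Rightarrow> 'k) set)"
proof -
  obtain Q R where "Q \<in> polys UNIV" "R \<in> polys UNIV"
    and "f = (\<lambda>v. Q (vec_nth v))" "g = (\<lambda>v. R (vec_nth v))"
    using assms unfolding polyfuns_def by auto
  then show ?thesis
    unfolding polyfuns_def by (auto intro!: exI[of _ "\<lambda>x. Q x * R x"] polys.mult)
qed

lemma polyfuns_diff:
  assumes "f \<in> polyfuns" "g \<in> polyfuns"
  shows "(\<lambda>v. f v - g v) \<in> (polyfuns :: ('k::comm_ring_1^'n \<Rightarrow> 'k) set)"
  using polyfuns_add[OF assms(1) polyfuns_mult[OF polyfuns_const[of "-1"] assms(2)]] by simp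

lemma polyfuns_sum:
  assumes "\<forall>s\<in>S. F s \<in> polyfuns"
  shows "(\<lambda>v. \<Sum>s\<in>S. F s v) \<in> (polyfuns :: ('k::comm_ring_1^'n \<Rightarrow> 'k) set)"
proof (cases "finite S")
  case True
  then show ?thesis using assms
    by (induction S rule: finite_induct) (simp_all add: polyfuns_const polyfuns_add)
qed (simp add: polyfuns_const)

lemma polyfuns_prod:
  assumes "\<forall>s\<in>S. F s \<in> polyfuns"
  shows "(\<lambda>v. \<Prod>s\<in>S. F s v) \<in> (polyfuns :: ('k::comm_ring_1^'n \<Rightarrow> 'k) set)"
proof (cases "finite S")
  case True
  then show ?thesis using assms
    by (induction S rule: finite_induct) (simp_all add: polyfuns_const polyfuns_mult)
qed (simp add: polyfuns_const)

lemma polyfuns_compose_linear: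
  fixes g :: "'k::comm_ring_1^'n^'n"
  assumes "f \<in> polyfuns"
  shows "(\<lambda>v. f (g *v v)) \<in> polyfuns"
proof -
  obtain Q where Q: "Q \<in> polys UNIV" "f = (\<lambda>v. Q (vec_nth v))"
    using assms unfolding polyfuns_def by auto
  have "(\<lambda>v. Q (vec_nth (g *v v))) \<in> polyfuns" using Q(1)
  proof (induction rule: polys.induct)
    case (coord i)
    have "(\<lambda>v. \<Sum>j\<in>UNIV. g$i$j * v$j) \<in> (polyfuns :: ('k^'n \<Rightarrow> 'k) set)"
      by (intro polyfuns_sum ballI polyfuns_mult polyfuns_const polyfuns_coord)
    then show ?case by (simp add: matrix_vector_mult_def)
  qed (simp_all add: polyfuns_const polyfuns_add polyfuns_mult)
  then show ?thesis using Q(2) by simp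
qed

text \<open>The witness is 1 - \<Prod>y\<in>C. (x_i - y_i) / (v_i - y_i), where i = i(y) is a coordinate
  in which y differs from v.\<close>
lemma polyfuns_separate_point_finite_set:
  fixes C :: "('k::field^'n) set"
  assumes "finite C" "v \<notin> C"
  shows "\<exists>p\<in>polyfuns. p v = 0 \<and> (\<forall>y\<in>C. p y = 1)"
proof -
  define i where "i y = (SOME i. v $ i \<noteq> y $ i)" for y
  have i: "v $ i y \<noteq> y $ i y" if "y \<in> C" for y
  proof -
    have "\<exists>j. v $ j \<noteq> y $ j" using assms(2) that by (metis vec_eq_iff)
    then show ?thesis unfolding i_def by (rule someI_ex)
  qed
  define p where "p x = 1 - (\<Prod>y\<in>C. (x $ i y - y $ i y) * (1 / (v $ i y - y $ i y)))" for x
  have "p \<in> polyfuns"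
    unfolding p_def
    by (intro polyfuns_diff polyfuns_prod polyfuns_mult polyfuns_const polyfuns_coord ballI)
  moreover have "p v = 0"
    unfolding p_def using i by (simp add: prod.neutral)
  moreover have "p y = 1" if "y \<in> C" for y
    unfolding p_def using assms(1) that by (simp, intro prod_zero bexI[of _ y]) auto
  ultimately show ?thesis by blast
qed

locale finite_matrix_group =
  fixes G :: "('k::field^'n^'n) set"
  assumes finite: "finite G"
    and invertible: "g \<in> G \<Longrightarrow> invertible g"
    and one: "mat 1 \<in> G"
    and mult: "g \<in> G \<Longrightarrow> h \<in> G \<Longrightarrow> g ** h \<in> G"
    and inverse: "g \<in> G \<Longrightarrow> matrix_inv g \<in> G"

lemma finite_reflection_group_imp_finite_matrix_group:
  "finite_reflection_group G \<Longrightarrow> finite_matrix_group G"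
  unfolding finite_reflection_group_def by unfold_locales auto

context finite_matrix_group
begin

lemma finite_orbit: "finite (orbit G v)"
  unfolding orbit_def using finite by simp

lemma orbit_self: "v \<in> orbit G v"
  unfolding orbit_def using one by (metis image_eqI matrix_vector_mul_lid)

lemma orbit_trans:
  assumes "w \<in> orbit G v" "u \<in> orbit G w"
  shows "u \<in> orbit G v"
  using assms mult unfolding orbit_def by (auto simp: matrix_vector_mul_assoc)

lemma orbit_sym:
  assumes "w \<in> orbit G v"
  shows "v \<in> orbit G w"
proof -
  obtain g where "g \<in> G" "w = g *v v" using assms unfolding orbit_def by auto
  then have "v = matrix_inv g *v w" using matrix_inv_mult_cancel invertible by metis
  then show ?thesis using inverse \<open>g \<in> G\<close> unfolding orbit_def by blast
qed

lemma orbit_eq_iff: "orbit G w = orbit G v \<longleftrightarrow> w \<in> orbit G v"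
  using orbit_self orbit_sym orbit_trans by blast

lemma invariant_orbit_const:
  assumes "f \<in> invariants G" "g \<in> G"
  shows "f (g *v x) = f x"
  using act_apply_image[OF invertible[OF assms(2)], of f x] assms
  unfolding invariants_def by auto

text \<open>Right translation by an element of G permutes the factors.\<close>
lemma orbit_product_invariant:
  assumes "p \<in> polyfuns"
  shows "(\<lambda>x. \<Prod>g\<in>G. p (g *v x)) \<in> invariants G"
proof -
  have "act h (\<lambda>x. \<Prod>g\<in>G. p (g *v x)) x = (\<Prod>g\<in>G. p (g *v x))" if "h \<in> G" for h x
  proof -
    have "act h (\<lambda>x. \<Prod>g\<in>G. p (g *v x)) x = (\<Prod>g\<in>G. p ((g ** matrix_inv h) *v x))"
      unfolding act_def by (simp add: matrix_vector_mul_assoc)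
    also have "\<dots> = (\<Prod>g\<in>G. p (g *v x))"
      using that mult inverse invertible[OF that]
      by (intro prod.reindex_bij_witness[where i="\<lambda>g. g ** h" and j="\<lambda>g. g ** matrix_inv h"])
        (auto simp: matrix_mul_assoc[symmetric] matrix_inv_left matrix_inv_right)
    finally show ?thesis .
  qed
  moreover have "(\<lambda>x. \<Prod>g\<in>G. p (g *v x)) \<in> polyfuns"
    using assms by (intro polyfuns_prod polyfuns_compose_linear ballI)
  ultimately show ?thesis unfolding invariants_def by auto
qed

lemma invariants_separate_orbits:
  assumes "w \<notin> orbit G v"
  shows "\<exists>f\<in>invariants G. f v = 0 \<and> f w = 1"
proof -
  have "v \<notin> orbit G w" using assms orbit_sym by blast
  then obtain p where p: "p \<in> polyfuns" "p v = 0" "\<forall>y\<in>orbit G w. p y = 1"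
    using polyfuns_separate_point_finite_set[OF finite_orbit] by blast
  define f where "f = (\<lambda>x. \<Prod>g\<in>G. p (g *v x))"
  have "f \<in> invariants G"
    unfolding f_def by (rule orbit_product_invariant[OF p(1)])
  moreover have "f v = 0"
    unfolding f_def using finite one p(2) by (intro prod_zero bexI[of _ "mat 1"]) simp_all
  moreover have "f w = 1"
    unfolding f_def using p(3) unfolding orbit_def by (intro prod.neutral) blast
  ultimately show ?thesis by blast
qed

lemma mem_orbit_iff_basic_invariants_eq:
  assumes "basic_invariants G B P"
  shows "w \<in> orbit G v \<longleftrightarrow> (\<forall>\<iota>\<in>B. P \<iota> w = P \<iota> v)"
proof
  assume "w \<in> orbit G v"
  then show "\<forall>\<iota>\<in>B. P \<iota> w = P \<iota> v"
    using assms invariant_orbit_const unfolding basic_invariants_def orbit_def by auto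
next
  assume same: "\<forall>\<iota>\<in>B. P \<iota> w = P \<iota> v"
  have generated: "invariants G = {(\<lambda>x. Q (\<lambda>\<iota>. P \<iota> x)) | Q. Q \<in> polys B}"
    using assms unfolding basic_invariants_def by (elim conjE)
  have "f w = f v" if f: "f \<in> invariants G" for f
  proof -
    obtain Q where "Q \<in> polys B" "f = (\<lambda>x. Q (\<lambda>\<iota>. P \<iota> x))"
      using f unfolding generated by blast
    then show ?thesis using same by (simp add: polys_cong)
  qed
  then show "w \<in> orbit G v"
    using invariants_separate_orbits[of w v] by (metis zero_neq_one)
qed

lemma normaliser_image_orbit:
  assumes "invertible \<gamma>" "(\<lambda>g. \<gamma> ** g ** matrix_inv \<gamma>) ` G = G"
  shows "(\<lambda>w. \<gamma> *v w) ` orbit G v = orbit G (\<gamma> *v v)"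
proof -
  have "\<gamma> ** g ** matrix_inv \<gamma> ** \<gamma> = \<gamma> ** g" for g
    by (metis matrix_mul_assoc matrix_inv_left[OF assms(1)] matrix_mul_rid)
  then have "(\<lambda>w. \<gamma> *v w) ` orbit G v = (\<lambda>g. (\<gamma> ** g ** matrix_inv \<gamma>) *v (\<gamma> *v v)) ` G"
    unfolding orbit_def image_image by (simp add: matrix_vector_mul_assoc)
  also have "\<dots> = (\<lambda>h. h *v (\<gamma> *v v)) ` ((\<lambda>g. \<gamma> ** g ** matrix_inv \<gamma>) ` G)"
    by (simp add: image_image)
  finally show ?thesis
    using assms(2) unfolding orbit_def by simp
qed

lemma fixed_points_orbit_iff:
  assumes "invertible \<gamma>" "(\<lambda>g. \<gamma> ** g ** matrix_inv \<gamma>) ` G = G"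
  shows "orbit G v \<in> fixed_points G \<gamma> \<longleftrightarrow> \<gamma> *v v \<in> orbit G v"
proof -
  have "orbit G v \<in> quotient_points G"
    unfolding quotient_points_def by blast
  then show ?thesis
    unfolding fixed_points_def
    using normaliser_image_orbit[OF assms, of v] orbit_eq_iff[of "\<gamma> *v v" v] by simp
qed

lemma zero_locus_gen_ideal_orbit_iff:
  assumes "finite U" "\<forall>\<iota>\<in>U. P \<iota> \<in> invariants G"
  shows "orbit G v \<in> zero_locus G (gen_ideal G U P) \<longleftrightarrow> (\<forall>\<iota>\<in>U. P \<iota> v = 0)"
proof
  assume "orbit G v \<in> zero_locus G (gen_ideal G U P)"
  then have vanish: "f v = 0" if "f \<in> gen_ideal G U P" for f
    using that orbit_self unfolding zero_locus_def by blast
  have "P \<iota> \<in> gen_ideal G U P" if "\<iota> \<in> U" for \<iota>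
  proof -
    have "(\<lambda>x. \<Sum>\<kappa>\<in>U. (if \<kappa> = \<iota> then 1 else 0) * P \<kappa> x)
        = (\<lambda>x. \<Sum>\<kappa>\<in>U. if \<kappa> = \<iota> then P \<kappa> x else 0)"
      by (intro ext sum.cong) auto
    also have "\<dots> = P \<iota>"
      using that assms(1) by simp
    finally show ?thesis
      unfolding gen_ideal_def using invariants_const
      by (intro CollectI exI[of _ "\<lambda>\<kappa> x. if \<kappa> = \<iota> then 1 else 0"]) auto
  qed
  then show "\<forall>\<iota>\<in>U. P \<iota> v = 0"
    using vanish by blast
next
  assume "\<forall>\<iota>\<in>U. P \<iota> v = 0"
  then have "P \<iota> w = 0" if "\<iota> \<in> U" "w \<in> orbit G v" for \<iota> w
    using that assms(2) unfolding orbit_def by (auto simp: invariant_orbit_const)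
  then show "orbit G v \<in> zero_locus G (gen_ideal G U P)"
    unfolding zero_locus_def gen_ideal_def quotient_points_def by auto
qed

end

lemma eigenfunction_fixed_iff:
  fixes f :: "'k::field^'n \<Rightarrow> 'k"
  assumes "invertible \<gamma>" "act \<gamma> f = (\<lambda>v. c * f v)" "c \<noteq> 0"
  shows "f (\<gamma> *v v) = f v \<longleftrightarrow> c = 1 \<or> f v = 0"
proof -
  have "f v = c * f (\<gamma> *v v)"
    using act_apply_image[OF assms(1), of f v] assms(2) by simp
  then show ?thesis
    using assms(3) by (metis mult_cancel_right1 mult_eq_0_iff mult.commute)
qed

theorem lemma5p1:
  fixes G :: "('k::{alg_closed_field, field_char_0}^'n^'n) set"
    and \<gamma> :: "'k^'n^'n"
    and B :: "'i set" and P :: "'i \<Rightarrow> 'k^'n \<Rightarrow> 'k" and \<epsilon> :: "'i \<Rightarrow> 'k"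
  assumes "finite_reflection_group G"
    and "invertible \<gamma>" and "semisimple \<gamma>"
    and "(\<lambda>g. \<gamma> ** g ** matrix_inv \<gamma>) ` G = G"
    and "basic_invariants G B P"
    and "\<forall>\<iota>\<in>B. \<epsilon> \<iota> \<noteq> 0 \<and> act \<gamma> (P \<iota>) = (\<lambda>v. \<epsilon> \<iota> * P \<iota> v)"
  shows "zero_locus G (gen_ideal G {\<iota>\<in>B. \<epsilon> \<iota> \<noteq> 1} P) = fixed_points G \<gamma>"
proof -
  interpret finite_matrix_group G
    using assms(1) by (rule finite_reflection_group_imp_finite_matrix_group)
  let ?U = "{\<iota>\<in>B. \<epsilon> \<iota> \<noteq> 1}"
  have U: "finite ?U" "\<forall>\<iota>\<in>?U. P \<iota> \<in> invariants G"
    using assms(5) unfolding basic_invariants_def by auto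
  have "(\<forall>\<iota>\<in>B. P \<iota> (\<gamma> *v v) = P \<iota> v) \<longleftrightarrow> (\<forall>\<iota>\<in>?U. P \<iota> v = 0)" for v
    using eigenfunction_fixed_iff[OF assms(2)] assms(6) by auto
  then have "orbit G v \<in> zero_locus G (gen_ideal G ?U P) \<longleftrightarrow> orbit G v \<in> fixed_points G \<gamma>"
    for v
    using zero_locus_gen_ideal_orbit_iff[OF U] mem_orbit_iff_basic_invariants_eq[OF assms(5)]
      fixed_points_orbit_iff[OF assms(2,4)] by simp
  moreover have "zero_locus G (gen_ideal G ?U P) \<subseteq> quotient_points G"
    "fixed_points G \<gamma> \<subseteq> quotient_points G"
    unfolding zero_locus_def fixed_points_def by auto
  ultimately show ?thesis
    unfolding quotient_points_def by blast
qed

end
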